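(* Fix integers $n\ge1$, $0\le l\le n-1$ and real $q>1$. For integers $D\ge2$ let $$I_{n,l}(q,D)=\int_{-1}^{1}(1-y)^{lq-1+\frac D2}(1+y)^{(l+1)q-1+(q-\frac12)D}\Big[\mathcal C^{(l+\frac{D-1}{2})}_{n-l-1}(y)\Big]^{2q}dy .$$ Then, as $D\to\infty$, $$I_{n,l}(q,D)=\Big(\frac{(2q-1)^{2q-1}}{q^{2q}}\Big)^{D/2}\Big(\frac{\Gamma(\frac D2+n-\frac32)}{\Gamma(\frac D2+l-\frac12)}\Big)^{2q}(D+2l-1)^{-1/2}\,Q_0(q,n,l)\,\big(1+o(1)\big),$$ and consequently $I_{n,l}(q,D)=\big(\frac{(2q-1)^{2q-1}}{q^{2q}}\big)^{D/2}D^{2q(n-l-1)-\frac12}\,4^{-q(n-l-1)}Q_0(q,n,l)\,(1+o(1))$, where $$Q_0(q,n,l)=\frac{\sqrt{2\pi}\,4^{q(n-l-1)}}{\Gamma(n-l)^{2q}}\,\frac{(2q-1)^{q(l+1)-\frac12}(q-1)^{2q(n-l-1)}}{q^{\,q(2n-1)-\frac12}}.$$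
   Context: $\mathcal C^{(\alpha)}_k$ denotes the Gegenbauer (ultraspherical) polynomial of degree $k$ and parameter $\alpha$, in the standard normalization (generating function $(1-2xt+t^2)^{-\alpha}=\sum_k\mathcal C^{(\alpha)}_k(x)t^k$). $(q-1)^0:=1$. *)

theory Defs
  imports "HOL-Analysis.Analysis"
begin

text \<open>Gegenbauer polynomial C_k^(alpha)(x), standard normalization: the coefficient of t^k
  in (1 - 2 x t + t^2) powr (-alpha), given by its explicit expansion.\<close>
definition gegenbauer :: "real \<Rightarrow> nat \<Rightarrow> real \<Rightarrow> real" where
  "gegenbauer \<alpha> k x =
     (\<Sum>j\<le>k div 2. (-1)^j * pochhammer \<alpha> (k - j) / (fact j * fact (k - 2*j)) * (2*x)^(k - 2*j))"

text \<open>The integral I_{n,l}(q,D); the 2q-th power of the Gegenbauer polynomial is read as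
  the 2q-th power of its absolute value.\<close>
definition I_nl :: "nat \<Rightarrow> nat \<Rightarrow> real \<Rightarrow> nat \<Rightarrow> real" where
  "I_nl n l q D = (LBINT y:{-1..1::real}.
      (1 - y) powr (real l * q - 1 + real D / 2)
    * (1 + y) powr ((real l + 1) * q - 1 + (q - 1/2) * real D)
    * \<bar>gegenbauer (real l + (real D - 1) / 2) (n - l - 1) y\<bar> powr (2*q))"

definition Q0 :: "real \<Rightarrow> nat \<Rightarrow> nat \<Rightarrow> real" where
  "Q0 q n l = sqrt (2*pi) * 4 powr (q * real (n - l - 1)) / (Gamma (real (n - l)) powr (2*q))
     * ((2*q - 1) powr (q * (real l + 1) - 1/2) * (q - 1) powr (2*q * real (n - l - 1)))
     / (q powr (q * (2 * real n - 1) - 1/2))"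

end

theory Submission
  imports Defs "HOL-Probability.Probability" "HOL-Real_Asymp.Real_Asymp"
begin

text \<open>
  Laplace's method. Write alpha = D/2 + l - 1/2, so that the Gegenbauer parameter is alpha and
  (alpha)_k = Gamma(D/2 + n - 3/2) / Gamma(D/2 + l - 1/2) for k = n - l - 1. Dividing by the
  Pochhammer symbol, C_k^(alpha)(y) / (alpha)_k tends to (2y)^k / k! uniformly on [-1,1], since all
  lower coefficients carry a ratio (alpha)_(k-j) / (alpha)_k = O(alpha^-j). The remaining weight
  (1-y)^A (1+y)^B with A ~ D/2 and B ~ (q - 1/2) D attains its maximum at y_c = (B-A)/(A+B), which
  tends to 1 - 1/q, and on the scale y = y_c + s / sqrt (A+B) it converges to a Gaussian in s while
  staying below exp (-s^2/8). Dominated convergence therefore evaluates the integral up to a factor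
  1 + o(1). Comparing the maximum of the weight with ((2q-1)^(2q-1) / q^(2q))^(D/2) leaves the
  constant sqrt q * Q_0, whose factor sqrt q cancels against sqrt (A+B) ~ sqrt (q (D + 2l - 1)).
\<close>

section \<open>Elementary limits and integrals\<close>

lemma tendsto_closer:
  fixes t y c :: "'a \<Rightarrow> real"
  assumes "eventually (\<lambda>x. \<bar>t x - c x\<bar> \<le> \<bar>y x - c x\<bar>) F" "(y \<longlongrightarrow> L) F" "(c \<longlongrightarrow> L) F"
  shows "(t \<longlongrightarrow> L) F"
proof -
  have "((\<lambda>x. t x - L) \<longlongrightarrow> 0) F"
  proof (rule Lim_null_comparison)
    show "eventually (\<lambda>x. norm (t x - L) \<le> \<bar>y x - L\<bar> + 2 * \<bar>c x - L\<bar>) F"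
      using assms(1) by eventually_elim (simp add: abs_le_iff abs_if split: if_splits)
    show "((\<lambda>x. \<bar>y x - L\<bar> + 2 * \<bar>c x - L\<bar>) \<longlongrightarrow> 0) F"
      using tendsto_add[OF tendsto_rabs_zero[OF LIM_zero[OF assms(2)]]
        tendsto_mult_right_zero[OF tendsto_rabs_zero[OF LIM_zero[OF assms(3)]]]] by simp
  qed
  then show ?thesis
    by (rule LIM_zero_cancel)
qed

lemma filterlim_linear_sequentially:
  fixes \<gamma> \<delta> :: real
  assumes "0 < \<gamma>"
  shows "filterlim (\<lambda>D. \<gamma> * real D + \<delta>) at_top sequentially"
proof -
  have "filterlim (\<lambda>x. \<gamma> * x + \<delta>) at_top at_top"
    using assms by real_asymp
  then show ?thesis
    by (rule filterlim_compose[OF _ filterlim_real_sequentially])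
qed

lemma eventually_linear_pos:
  fixes \<gamma> \<delta> :: real
  assumes "0 < \<gamma>"
  shows "eventually (\<lambda>D. 0 < \<gamma> * real D + \<delta>) sequentially"
  using filterlim_linear_sequentially[OF assms] by (simp add: filterlim_at_top_dense)

lemma tendsto_linear_ratio:
  fixes a b c d :: real
  assumes "0 < c"
  shows "(\<lambda>D. (a * real D + b) / (c * real D + d)) \<longlonglongrightarrow> a / c"
proof -
  have "((\<lambda>x. (a * x + b) / (c * x + d)) \<longlongrightarrow> a / c) at_top"
    using assms by real_asymp (simp add: divide_inverse)
  then show ?thesis
    by (rule filterlim_compose[OF _ filterlim_real_sequentially])
qed

lemma has_bochner_integral_gaussian:
  fixes v :: real
  assumes "0 < v"
  shows "has_bochner_integral lborel (\<lambda>x. exp (- (x^2) / (2 * v))) (sqrt (2 * pi * v))"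
proof -
  have "(\<lambda>x. exp (- (x^2) / (2 * v))) = (\<lambda>x. sqrt (2 * pi * v) * normal_density 0 (sqrt v) x)"
    using assms by (simp add: normal_density_def fun_eq_iff)
  then show ?thesis
    using assms by (simp add: has_bochner_integral_iff integrable_normal_density)
qed

lemma set_integral_rescale:
  fixes f :: "real \<Rightarrow> real" and S :: "real set" and c r :: real
  assumes "0 < r"
  shows "(LBINT y:S. f y) * r = (\<integral>s. indicator S (c + s / r) * f (c + s / r) \<partial>lborel)"
proof -
  have "(LBINT y:S. f y) = (\<integral>y. indicator S y * f y \<partial>lborel)"
    by (simp add: set_lebesgue_integral_def)
  also have "\<dots> = \<bar>1 / r\<bar> *\<^sub>R (\<integral>s. indicator S (c + 1 / r * s) * f (c + 1 / r * s) \<partial>lborel)"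
    using assms by (intro lborel_integral_real_affine) simp
  finally show ?thesis
    using assms by simp
qed

section \<open>Pochhammer symbols and Gegenbauer polynomials\<close>

lemma tendsto_pochhammer_div_power:
  fixes x :: "'a \<Rightarrow> real"
  assumes "filterlim x at_top F"
  shows "((\<lambda>t. pochhammer (x t + c) k / x t ^ k) \<longlongrightarrow> 1) F"
proof -
  have "((\<lambda>t. \<Prod>i<k. 1 + (c + real i) / x t) \<longlongrightarrow> (\<Prod>i<k. 1 + 0)) F"
    using assms by (intro tendsto_prod tendsto_add tendsto_const tendsto_divide_0[OF tendsto_const]
        filterlim_at_top_imp_at_infinity)
  moreover have "eventually (\<lambda>t. 0 < x t) F"
    using assms by (simp add: filterlim_at_top_dense)
  then have "eventually (\<lambda>t. (\<Prod>i<k. 1 + (c + real i) / x t) = pochhammer (x t + c) k / x t ^ k) F"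
  proof eventually_elim
    case (elim t)
    have "pochhammer (x t + c) k / x t ^ k = (\<Prod>i<k. (x t + c + real i) / x t)"
      by (simp add: pochhammer_prod atLeast0LessThan prod_dividef)
    also have "\<dots> = (\<Prod>i<k. 1 + (c + real i) / x t)"
      using elim by (intro prod.cong) (auto simp: field_simps)
    finally show ?case ..
  qed
  ultimately show ?thesis
    by (auto intro: Lim_transform_eventually)
qed

lemma tendsto_pochhammer_ratio:
  fixes x :: "'a \<Rightarrow> real"
  assumes x: "filterlim x at_top F" and "j \<le> k"
  shows "((\<lambda>t. pochhammer (x t) (k - j) / pochhammer (x t) k) \<longlongrightarrow> (if j = 0 then 1 else 0)) F"
proof -
  have x_pos: "eventually (\<lambda>t. 0 < x t) F"
    using x by (simp add: filterlim_at_top_dense)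
  show ?thesis
  proof (cases "j = 0")
    case True
    have "eventually (\<lambda>t. 1 = pochhammer (x t) (k - j) / pochhammer (x t) k) F"
      using x_pos by eventually_elim (simp add: True pochhammer_pos[THEN less_imp_neq, symmetric])
    then show ?thesis
      using True by (auto intro: Lim_transform_eventually)
  next
    case False
    have ratio: "((\<lambda>t. pochhammer (x t) m / x t ^ m) \<longlongrightarrow> 1) F" for m
      using tendsto_pochhammer_div_power[OF x, of 0 m] by simp
    have "((\<lambda>t. pochhammer (x t) (k - j) / x t ^ (k - j) / (pochhammer (x t) k / x t ^ k)
        * inverse (x t ^ j)) \<longlongrightarrow> 1 / 1 * 0) F"
      using False by (intro tendsto_mult tendsto_divide ratio tendsto_inverse_0_at_top
          filterlim_pow_at_top x) auto
    moreover have "eventually (\<lambda>t. pochhammer (x t) (k - j) / x t ^ (k - j) / (pochhammer (x t) k / x t ^ k)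
        * inverse (x t ^ j) = pochhammer (x t) (k - j) / pochhammer (x t) k) F"
      using x_pos
    proof eventually_elim
      case (elim t)
      have "x t ^ k = x t ^ (k - j) * x t ^ j"
        using \<open>j \<le> k\<close> by (simp flip: power_add)
      with elim show ?case
        by (simp add: field_simps pochhammer_pos[THEN less_imp_neq, symmetric])
    qed
    ultimately show ?thesis
      using False by (auto intro: Lim_transform_eventually)
  qed
qed

lemma asymp_equiv_pochhammer_powr:
  fixes c d p e :: real
  shows "(\<lambda>D. pochhammer (real D / 2 + c) k powr p * (real D + d) powr e)
    \<sim>[at_top] (\<lambda>D. (real D / 2) powr (p * real k) * real D powr e)"
proof (rule asymp_equivI')
  have half: "filterlim (\<lambda>D. real D / 2) at_top sequentially"
    using filterlim_linear_sequentially[of "1/2" 0] by simp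
  have "(\<lambda>D. (pochhammer (real D / 2 + c) k / (real D / 2) ^ k) powr p
      * ((1 * real D + d) / (1 * real D + 0)) powr e) \<longlonglongrightarrow> 1 powr p * (1 / 1) powr e"
    by (intro tendsto_intros tendsto_pochhammer_div_power half tendsto_linear_ratio) auto
  moreover have "eventually (\<lambda>D. 0 < real D / 2 + c \<and> 0 < real D + d \<and> 0 < real D) sequentially"
    using eventually_linear_pos[of "1/2" c] eventually_linear_pos[of 1 d] eventually_linear_pos[of 1 0]
    by (simp add: eventually_conj_iff)
  then have "eventually (\<lambda>D. (pochhammer (real D / 2 + c) k / (real D / 2) ^ k) powr p
      * ((1 * real D + d) / (1 * real D + 0)) powr e
    = pochhammer (real D / 2 + c) k powr p * (real D + d) powr e
      / ((real D / 2) powr (p * real k) * real D powr e)) sequentially"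
  proof eventually_elim
    case (elim D)
    then have "0 < pochhammer (real D / 2 + c) k"
      by (intro pochhammer_pos) simp
    with elim show ?case
      by (simp add: powr_divide powr_mult powr_realpow[symmetric] powr_powr mult.commute)
  qed
  ultimately show "(\<lambda>D. pochhammer (real D / 2 + c) k powr p * (real D + d) powr e
      / ((real D / 2) powr (p * real k) * real D powr e)) \<longlonglongrightarrow> 1"
    by (auto intro: Lim_transform_eventually)
qed

lemma gegenbauer_div_pochhammer:
  "gegenbauer \<alpha> k y / pochhammer \<alpha> k =
    (\<Sum>j\<le>k div 2. (-1)^j / (fact j * fact (k - 2*j)) * (pochhammer \<alpha> (k - j) / pochhammer \<alpha> k)
      * (2*y)^(k - 2*j))"
  unfolding gegenbauer_def sum_divide_distrib by (intro sum.cong) auto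

lemma tendsto_gegenbauer_div_pochhammer:
  fixes \<alpha> z :: "nat \<Rightarrow> real"
  assumes "filterlim \<alpha> at_top sequentially" and "z \<longlonglongrightarrow> z0"
  shows "(\<lambda>D. gegenbauer (\<alpha> D) k (z D) / pochhammer (\<alpha> D) k) \<longlonglongrightarrow> (2*z0)^k / fact k"
proof -
  have "(\<lambda>D. \<Sum>j\<le>k div 2. (-1)^j / (fact j * fact (k - 2*j)) * (pochhammer (\<alpha> D) (k - j) / pochhammer (\<alpha> D) k)
      * (2*z D)^(k - 2*j))
    \<longlonglongrightarrow> (\<Sum>j\<le>k div 2. (-1)^j / (fact j * fact (k - 2*j)) * (if j = 0 then 1 else 0) * (2*z0)^(k - 2*j))"
    using assms by (intro tendsto_sum tendsto_mult tendsto_const tendsto_power tendsto_pochhammer_ratio) auto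
  also have "(\<Sum>j\<le>k div 2. (-1)^j / (fact j * fact (k - 2*j)) * (if j = 0 then 1 else 0) * (2*z0)^(k - 2*j))
      = (2*z0)^k / fact k"
    by (subst sum.remove[of _ 0]) auto
  finally show ?thesis
    by (simp only: gegenbauer_div_pochhammer)
qed

lemma bounded_gegenbauer_div_pochhammer:
  fixes \<alpha> :: "nat \<Rightarrow> real"
  assumes "filterlim \<alpha> at_top sequentially"
  obtains M where "\<And>D y. \<bar>y\<bar> \<le> 1 \<Longrightarrow> \<bar>gegenbauer (\<alpha> D) k y / pochhammer (\<alpha> D) k\<bar> \<le> M"
proof -
  define c where "c j D = (-1)^j / (fact j * fact (k - 2*j)) * (pochhammer (\<alpha> D) (k - j) / pochhammer (\<alpha> D) k)"
    for j D
  have "\<exists>K. \<forall>D. \<bar>c j D\<bar> \<le> K" if "j \<in> {..k div 2}" for j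
  proof -
    have "c j \<longlonglongrightarrow> (-1)^j / (fact j * fact (k - 2*j)) * (if j = 0 then 1 else 0)"
      unfolding c_def using that by (intro tendsto_mult tendsto_const tendsto_pochhammer_ratio assms) auto
    then have "Bseq (c j)"
      by (intro convergent_imp_Bseq convergentI)
    then show ?thesis
      unfolding Bseq_def by force
  qed
  then obtain K where K: "\<And>j D. j \<in> {..k div 2} \<Longrightarrow> \<bar>c j D\<bar> \<le> K j"
    by metis
  show ?thesis
  proof (rule that)
    fix D and y :: real
    assume y: "\<bar>y\<bar> \<le> 1"
    have "\<bar>gegenbauer (\<alpha> D) k y / pochhammer (\<alpha> D) k\<bar> = \<bar>\<Sum>j\<le>k div 2. c j D * (2*y)^(k - 2*j)\<bar>"
      by (simp add: gegenbauer_div_pochhammer c_def)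
    also have "\<dots> \<le> (\<Sum>j\<le>k div 2. \<bar>c j D * (2*y)^(k - 2*j)\<bar>)"
      by (rule sum_abs)
    also have "\<dots> = (\<Sum>j\<le>k div 2. \<bar>c j D\<bar> * \<bar>2*y\<bar>^(k - 2*j))"
      by (simp only: abs_mult power_abs)
    also have "\<dots> \<le> (\<Sum>j\<le>k div 2. K j * 2^k)"
    proof (rule sum_mono)
      fix j assume j: "j \<in> {..k div 2}"
      have "\<bar>2*y\<bar>^(k - 2*j) \<le> 2^(k - 2*j)"
        using y by (intro power_mono) auto
      also have "\<dots> \<le> 2^k"
        by (intro power_increasing) auto
      finally show "\<bar>c j D\<bar> * \<bar>2*y\<bar>^(k - 2*j) \<le> K j * 2^k"
        using K[OF j, of D] by (intro mult_mono) auto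
    qed
    finally show "\<bar>gegenbauer (\<alpha> D) k y / pochhammer (\<alpha> D) k\<bar> \<le> (\<Sum>j\<le>k div 2. K j * 2^k)" .
  qed
qed

section \<open>The maximum of the beta weight\<close>

text \<open>The maximum of (1-y)^A (1+y)^B over [-1,1], attained at y = (B-A)/(A+B).\<close>


definition beta_peak :: "real \<Rightarrow> real \<Rightarrow> real" where
  "beta_peak A B = (2*A/(A+B)) powr A * (2*B/(A+B)) powr B"

lemma log_beta_weight_taylor:
  fixes A B c y :: real
  assumes "-1 < c" "c < 1" "-1 < y" "y < 1"
  shows "\<exists>t. -1 < t \<and> t < 1 \<and> \<bar>t - c\<bar> \<le> \<bar>y - c\<bar> \<and>
    A*ln(1-y) + B*ln(1+y) = A*ln(1-c) + B*ln(1+c) + (B/(1+c) - A/(1-c))*(y-c)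
      - (A/(1-t)^2 + B/(1+t)^2)/2*(y-c)^2"
proof (cases "y = c")
  case False
  define diff where "diff m = (if m = 0 then (\<lambda>x. A*ln(1-x) + B*ln(1+x))
      else if m = 1 then (\<lambda>x. B/(1+x) - A/(1-x)) else (\<lambda>x. -(A/(1-x)^2 + B/(1+x)^2)))"
    for m :: nat
  have "DERIV (diff m) x :> diff (Suc m) x" if "m < 2" "min c y \<le> x" "x \<le> max c y" for m x
  proof -
    have "-1 < x" "x < 1" using that assms by auto
    with \<open>m < 2\<close> show ?thesis unfolding diff_def
      by (auto intro!: derivative_eq_intros simp: less_2_cases_iff field_simps power2_eq_square)
  qed
  with Taylor[of 2 diff "diff 0" "min c y" "max c y" c y] False
  obtain t where t: "if y < c then y < t \<and> t < c else c < t \<and> t < y"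
    and taylor: "diff 0 y = (\<Sum>m<2. diff m c / fact m * (y - c)^m) + diff 2 t / fact 2 * (y - c)^2"
    by (auto simp: diff_def)
  have "(\<Sum>m<2. diff m c / fact m * (y - c)^m)
      = A*ln(1-c) + B*ln(1+c) + (B/(1+c) - A/(1-c))*(y-c)"
    by (simp add: diff_def numeral_2_eq_2)
  moreover have "diff 2 t / fact 2 * (y - c)^2 = - ((A/(1-t)^2 + B/(1+t)^2)/2*(y-c)^2)"
    by (simp add: diff_def algebra_simps)
  ultimately show ?thesis
    using t taylor assms by (intro exI[of _ t]) (auto simp: diff_def split: if_splits)
qed (use assms in auto)

lemma beta_weight_eq_peak_exp:
  fixes A B y :: real
  assumes "0 < A" "0 < B" "-1 < y" "y < 1"
  defines "c \<equiv> (B - A) / (A + B)"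
  shows "\<exists>t. -1 < t \<and> t < 1 \<and> \<bar>t - c\<bar> \<le> \<bar>y - c\<bar> \<and>
    (1-y) powr A * (1+y) powr B = beta_peak A B * exp (- (A/(1-t)^2 + B/(1+t)^2)/2 * (y-c)^2)"
proof -
  have c_minus: "1 - c = 2*A/(A+B)" and c_plus: "1 + c = 2*B/(A+B)"
    using assms(1,2) by (simp_all add: c_def field_simps)
  have "0 < 2*A/(A+B)" "0 < 2*B/(A+B)"
    using assms(1,2) by simp_all
  then have c: "-1 < c" "c < 1"
    using c_minus c_plus by linarith+
  have crit: "B/(1+c) - A/(1-c) = 0"
    unfolding c_minus c_plus using assms(1,2) by (simp add: field_simps)
  obtain t where t: "-1 < t" "t < 1" "\<bar>t - c\<bar> \<le> \<bar>y - c\<bar>" and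
    taylor: "A*ln(1-y) + B*ln(1+y) = A*ln(1-c) + B*ln(1+c) - (A/(1-t)^2 + B/(1+t)^2)/2*(y-c)^2"
    using log_beta_weight_taylor[OF c assms(3,4), of A B] crit by auto
  have peak: "beta_peak A B = exp (A*ln(1-c) + B*ln(1+c))"
    using c assms(1,2) by (simp add: beta_peak_def c_minus c_plus powr_def exp_add mult.commute)
  have "(1-y) powr A * (1+y) powr B = exp (A*ln(1-y) + B*ln(1+y))"
    using assms by (simp add: powr_def exp_add mult.commute)
  also have "\<dots> = exp (A*ln(1-c) + B*ln(1+c) + (- (A/(1-t)^2 + B/(1+t)^2)/2 * (y-c)^2))"
    unfolding taylor by (simp add: field_simps)
  also have "\<dots> = beta_peak A B * exp (- (A/(1-t)^2 + B/(1+t)^2)/2 * (y-c)^2)"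
    unfolding peak exp_add ..
  finally show ?thesis
    using t by blast
qed

lemma beta_weight_le_peak_gaussian:
  fixes A B y :: real
  assumes "0 < A" "0 < B" "-1 \<le> y" "y \<le> 1"
  shows "(1-y) powr A * (1+y) powr B \<le> beta_peak A B * exp (- (A+B)/8 * (y - (B-A)/(A+B))^2)"
proof (cases "y = -1 \<or> y = 1")
  case False
  with assms obtain t where t: "-1 < t" "t < 1" and
    eq: "(1-y) powr A * (1+y) powr B
      = beta_peak A B * exp (- (A/(1-t)^2 + B/(1+t)^2)/2 * (y - (B-A)/(A+B))^2)"
    using beta_weight_eq_peak_exp[of A B y] by auto
  define S where "S = A/(1-t)^2 + B/(1+t)^2"
  have "(1-t)^2 \<le> 2^2" "(1+t)^2 \<le> 2^2"
    using t by (intro power_mono; simp)+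
  then have "A/4 \<le> A/(1-t)^2" "B/4 \<le> B/(1+t)^2"
    using t assms(1,2) by (intro divide_left_mono; simp)+
  then have "A/4 + B/4 \<le> S"
    unfolding S_def by (rule add_mono)
  then have "- S/2 \<le> - (A+B)/8"
    by (simp add: field_simps)
  then have "- S/2 * (y - (B-A)/(A+B))^2 \<le> - (A+B)/8 * (y - (B-A)/(A+B))^2"
    by (rule mult_right_mono) simp
  moreover have "beta_peak A B \<ge> 0"
    by (simp add: beta_peak_def)
  ultimately show ?thesis
    unfolding eq S_def[symmetric] by (intro mult_left_mono) auto
qed (use assms in \<open>auto simp: beta_peak_def\<close>)

lemma beta_peak_linear_eq:
  fixes \<alpha> \<beta> a0 b0 x :: real
  assumes "0 < \<alpha>" "0 < \<beta>" "0 < \<alpha> * x + a0" "0 < \<beta> * x + b0"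
  defines "c \<equiv> (a0 + b0) / (\<alpha> + \<beta>)"
  shows "beta_peak (\<alpha> * x + a0) (\<beta> * x + b0) = beta_peak \<alpha> \<beta> powr x
    * (2*\<alpha>/(\<alpha>+\<beta>)) powr a0 * (2*\<beta>/(\<alpha>+\<beta>)) powr b0
    * exp (\<alpha> * ((x + a0/\<alpha>) * ln ((x + a0/\<alpha>) / (x + c)))
         + \<beta> * ((x + b0/\<beta>) * ln ((x + b0/\<beta>) / (x + c))))"
proof -
  have s: "0 < \<alpha> + \<beta>" using assms by simp
  have N: "(\<alpha> * x + a0) + (\<beta> * x + b0) = (\<alpha> + \<beta>) * (x + c)"
    using s by (simp add: c_def field_simps)
  have xc: "0 < x + c"
    using N assms s by (metis add_pos_pos zero_less_mult_pos)
  have r1: "0 < x + a0/\<alpha>" and r2: "0 < x + b0/\<beta>"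
    using assms by (simp_all add: field_simps)
  have e1: "\<alpha> * x + a0 = \<alpha> * (x + a0/\<alpha>)" and e2: "\<beta> * x + b0 = \<beta> * (x + b0/\<beta>)"
    using assms by (simp_all add: field_simps)
  show ?thesis
    unfolding beta_peak_def N using assms(1,2) s xc r1 r2
    by (simp add: powr_def ln_mult ln_div exp_add[symmetric] e1 e2) (simp add: algebra_simps)
qed

lemma tendsto_beta_peak_linear:
  fixes \<alpha> \<beta> a0 b0 :: real
  assumes "0 < \<alpha>" "0 < \<beta>"
  shows "(\<lambda>D. beta_peak (\<alpha> * real D + a0) (\<beta> * real D + b0) / beta_peak \<alpha> \<beta> powr real D)
    \<longlonglongrightarrow> (2*\<alpha>/(\<alpha>+\<beta>)) powr a0 * (2*\<beta>/(\<alpha>+\<beta>)) powr b0"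
proof -
  define c where "c = (a0 + b0) / (\<alpha> + \<beta>)"
  define E where "E x = \<alpha> * ((x + a0/\<alpha>) * ln ((x + a0/\<alpha>) / (x + c)))
    + \<beta> * ((x + b0/\<beta>) * ln ((x + b0/\<beta>) / (x + c)))" for x
  have "(E \<longlongrightarrow> \<alpha> * (a0/\<alpha> - c) + \<beta> * (b0/\<beta> - c)) at_top"
    unfolding E_def by real_asymp
  also have "\<alpha> * (a0/\<alpha> - c) + \<beta> * (b0/\<beta> - c) = (a0 + b0) - (\<alpha> + \<beta>) * c"
    using assms by (simp add: algebra_simps)
  also have "\<dots> = 0"
    using assms by (simp add: c_def)
  finally have "(\<lambda>D. (2*\<alpha>/(\<alpha>+\<beta>)) powr a0 * (2*\<beta>/(\<alpha>+\<beta>)) powr b0 * exp (E (real D)))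
    \<longlonglongrightarrow> (2*\<alpha>/(\<alpha>+\<beta>)) powr a0 * (2*\<beta>/(\<alpha>+\<beta>)) powr b0 * exp 0"
    by (intro tendsto_intros filterlim_compose[OF _ filterlim_real_sequentially])
  moreover have "eventually (\<lambda>D. 0 < \<alpha> * real D + a0 \<and> 0 < \<beta> * real D + b0) sequentially"
    using assms by (intro eventually_conj eventually_linear_pos)
  then have "eventually (\<lambda>D. (2*\<alpha>/(\<alpha>+\<beta>)) powr a0 * (2*\<beta>/(\<alpha>+\<beta>)) powr b0 * exp (E (real D))
    = beta_peak (\<alpha> * real D + a0) (\<beta> * real D + b0) / beta_peak \<alpha> \<beta> powr real D) sequentially"
  proof eventually_elim
    case (elim D)
    have "0 < beta_peak \<alpha> \<beta>"
      using assms by (simp add: beta_peak_def)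
    with beta_peak_linear_eq[OF assms, of "real D" a0 b0] elim show ?case
      by (simp add: E_def c_def)
  qed
  ultimately show ?thesis
    by (auto intro: Lim_transform_eventually)
qed

lemma tendsto_beta_peak_half:
  fixes q a0 b0 :: real
  assumes "1/2 < q"
  shows "(\<lambda>D. beta_peak (real D / 2 + a0) ((q - 1/2) * real D + b0)
      / ((2*q - 1) powr (2*q - 1) / q powr (2*q)) powr (real D / 2))
    \<longlonglongrightarrow> (1/q) powr a0 * ((2*q - 1)/q) powr b0"
proof -
  have q: "0 < q" "0 < 2*q - 1"
    using assms by auto
  have "ln (beta_peak (1/2) (q - 1/2)) = ln (((2*q - 1) powr (2*q - 1) / q powr (2*q)) powr (1/2))"
    using q by (simp add: beta_peak_def ln_mult ln_div ln_powr algebra_simps)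
  moreover have "0 < beta_peak (1/2) (q - 1/2)" "0 < ((2*q - 1) powr (2*q - 1) / q powr (2*q)) powr (1/2)"
    using q by (simp_all add: beta_peak_def)
  ultimately have "beta_peak (1/2) (q - 1/2) = ((2*q - 1) powr (2*q - 1) / q powr (2*q)) powr (1/2)"
    by (simp only: ln_inj_iff)
  then have "((2*q - 1) powr (2*q - 1) / q powr (2*q)) powr (real D / 2) = beta_peak (1/2) (q - 1/2) powr real D"
    for D :: nat by (simp add: powr_powr)
  moreover have "2 * (1/2) / (1/2 + (q - 1/2)) = 1/q" "2 * (q - 1/2) / (1/2 + (q - 1/2)) = (2*q - 1)/q"
    using q by (simp_all add: field_simps)
  ultimately show ?thesis
    using tendsto_beta_peak_linear[of "1/2" "q - 1/2" a0 b0] q by (simp add: mult.commute)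
qed

section \<open>Laplace's method for beta integrals\<close>

text \<open>
  The exponents tend to infinity in the ratio a : 1 - a. The weight (1-y)^(A D) (1+y)^(B D) then
  concentrates at 1 - 2a on the scale 1 / sqrt (A D + B D), which rescaled_point undoes.
\<close>

locale beta_laplace =
  fixes A B :: "nat \<Rightarrow> real" and a :: real
  assumes tendsto_ratio: "(\<lambda>D. A D / (A D + B D)) \<longlonglongrightarrow> a"
    and a_pos: "0 < a" and a_less_1: "a < 1"
    and filterlim_sum: "filterlim (\<lambda>D. A D + B D) at_top sequentially"
begin

definition rescaled_point :: "nat \<Rightarrow> real \<Rightarrow> real" where
  "rescaled_point D s = (B D - A D) / (A D + B D) + s / sqrt (A D + B D)"

lemma eventually_exponents_pos: "eventually (\<lambda>D. 0 < A D \<and> 0 < B D) sequentially"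
proof -
  have "eventually (\<lambda>D. 0 < A D + B D) sequentially"
    using filterlim_sum by (simp add: filterlim_at_top_dense)
  moreover have "eventually (\<lambda>D. 0 < A D / (A D + B D) \<and> A D / (A D + B D) < 1) sequentially"
    using order_tendstoD[OF tendsto_ratio] a_pos a_less_1 by (auto intro: eventually_conj)
  ultimately show ?thesis
    by eventually_elim (auto simp: zero_less_divide_iff divide_less_eq)
qed

lemma tendsto_complement_ratio: "(\<lambda>D. B D / (A D + B D)) \<longlonglongrightarrow> 1 - a"
proof -
  have "eventually (\<lambda>D. 1 - A D / (A D + B D) = B D / (A D + B D)) sequentially"
    using eventually_exponents_pos by eventually_elim (simp add: field_simps)
  then show ?thesis
    using tendsto_diff[OF tendsto_const[of 1] tendsto_ratio] by (rule Lim_transform_eventually[rotated])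
qed

lemma tendsto_center: "(\<lambda>D. (B D - A D) / (A D + B D)) \<longlonglongrightarrow> 1 - 2*a"
proof -
  have "eventually (\<lambda>D. 1 - 2 * (A D / (A D + B D)) = (B D - A D) / (A D + B D)) sequentially"
    using eventually_exponents_pos by eventually_elim (simp add: field_simps)
  then show ?thesis
    by (rule Lim_transform_eventually[rotated]) (intro tendsto_intros tendsto_ratio)
qed

lemma tendsto_rescaling: "(\<lambda>D. s / sqrt (A D + B D)) \<longlonglongrightarrow> 0"
  by (intro tendsto_divide_0[OF tendsto_const] filterlim_at_top_imp_at_infinity
      filterlim_compose[OF sqrt_at_top filterlim_sum])

lemma tendsto_rescaled_point: "(\<lambda>D. rescaled_point D s) \<longlonglongrightarrow> 1 - 2*a"
  unfolding rescaled_point_def using tendsto_add[OF tendsto_center tendsto_rescaling] by simp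

lemma rescaled_point_offset_sq:
  assumes "0 < A D + B D"
  shows "(rescaled_point D s - (B D - A D) / (A D + B D))^2 = s^2 / (A D + B D)"
  using assms by (simp add: rescaled_point_def power_divide)

definition rescaled_weight :: "nat \<Rightarrow> real \<Rightarrow> real" where
  "rescaled_weight D s = (1 - rescaled_point D s) powr A D * (1 + rescaled_point D s) powr B D
    / beta_peak (A D) (B D)"

lemma rescaled_weight_nonneg: "0 \<le> rescaled_weight D s"
  by (simp add: rescaled_weight_def beta_peak_def)

lemma rescaled_weight_le_gaussian:
  assumes "0 < A D" "0 < B D" "-1 \<le> rescaled_point D s" "rescaled_point D s \<le> 1"
  shows "rescaled_weight D s \<le> exp (- (s^2) / 8)"
proof -
  have cancel: "- N/8 * (s^2 / N) = - (s^2) / 8" if "0 < N" for N :: real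
    using that by simp
  have "- (A D + B D)/8 * (rescaled_point D s - (B D - A D) / (A D + B D))^2 = - (s^2) / 8"
    using assms(1,2) by (simp only: rescaled_point_offset_sq cancel add_pos_pos)
  moreover have "0 < beta_peak (A D) (B D)"
    using assms(1,2) by (simp add: beta_peak_def)
  ultimately show ?thesis
    using beta_weight_le_peak_gaussian[OF assms]
    by (simp add: rescaled_weight_def pos_divide_le_eq mult.commute)
qed

lemma rescaled_weight_eq_exp:
  obtains t where "t \<longlonglongrightarrow> 1 - 2*a"
    and "eventually (\<lambda>D. rescaled_weight D s
      = exp (- (A D / (A D + B D) / (1 - t D)^2 + B D / (A D + B D) / (1 + t D)^2) / 2 * s^2)) sequentially"
proof -
  let ?y = "\<lambda>D. rescaled_point D s" and ?c = "\<lambda>D. (B D - A D) / (A D + B D)"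
  have "eventually (\<lambda>D. -1 < ?y D \<and> ?y D < 1) sequentially"
    using order_tendstoD[OF tendsto_rescaled_point] a_pos a_less_1 by (auto intro: eventually_conj)
  then have ev: "eventually (\<lambda>D. 0 < A D \<and> 0 < B D \<and> -1 < ?y D \<and> ?y D < 1) sequentially"
    using eventually_exponents_pos by eventually_elim auto
  have "\<forall>D. \<exists>t. 0 < A D \<and> 0 < B D \<and> -1 < ?y D \<and> ?y D < 1 \<longrightarrow> \<bar>t - ?c D\<bar> \<le> \<bar>?y D - ?c D\<bar> \<and>
    (1 - ?y D) powr A D * (1 + ?y D) powr B D
      = beta_peak (A D) (B D) * exp (- (A D/(1-t)^2 + B D/(1+t)^2)/2 * (?y D - ?c D)^2)"
    using beta_weight_eq_peak_exp by blast
  then obtain t where t: "\<And>D. 0 < A D \<and> 0 < B D \<and> -1 < ?y D \<and> ?y D < 1 \<Longrightarrow>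
    \<bar>t D - ?c D\<bar> \<le> \<bar>?y D - ?c D\<bar> \<and> (1 - ?y D) powr A D * (1 + ?y D) powr B D
      = beta_peak (A D) (B D) * exp (- (A D/(1-t D)^2 + B D/(1+t D)^2)/2 * (?y D - ?c D)^2)"
    by metis
  show ?thesis
  proof
    have "eventually (\<lambda>D. \<bar>t D - ?c D\<bar> \<le> \<bar>?y D - ?c D\<bar>) sequentially"
      using ev by eventually_elim (use t in blast)
    then show "t \<longlonglongrightarrow> 1 - 2*a"
      by (rule tendsto_closer[OF _ tendsto_rescaled_point tendsto_center])
    show "eventually (\<lambda>D. rescaled_weight D s
      = exp (- (A D / (A D + B D) / (1 - t D)^2 + B D / (A D + B D) / (1 + t D)^2) / 2 * s^2)) sequentially"
      using ev
    proof eventually_elim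
      case (elim D)
      then have "(?y D - ?c D)^2 = s^2 / (A D + B D)"
        by (simp add: rescaled_point_offset_sq)
      then have "- (A D/(1-t D)^2 + B D/(1+t D)^2)/2 * (?y D - ?c D)^2
          = - (A D / (A D + B D) / (1 - t D)^2 + B D / (A D + B D) / (1 + t D)^2) / 2 * s^2"
        by (simp add: algebra_simps)
      moreover have "0 < beta_peak (A D) (B D)"
        using elim by (simp add: beta_peak_def)
      ultimately show ?case
        using t[OF elim] by (simp add: rescaled_weight_def)
    qed
  qed
qed

lemma tendsto_rescaled_weight: "(\<lambda>D. rescaled_weight D s) \<longlonglongrightarrow> exp (- (s^2) / (2 * (4*a*(1-a))))"
proof -
  obtain t where lim_t: "t \<longlonglongrightarrow> 1 - 2*a" and eq: "eventually (\<lambda>D. rescaled_weight D s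
      = exp (- (A D / (A D + B D) / (1 - t D)^2 + B D / (A D + B D) / (1 + t D)^2) / 2 * s^2)) sequentially"
    by (rule rescaled_weight_eq_exp)
  have limit_exponent: "- (a / (1 - (1 - 2*a))^2 + (1-a) / (1 + (1 - 2*a))^2) / 2 * s^2
      = - (s^2) / (2 * (4*a*(1-a)))"
  proof -
    have inv: "x / (2*x)^2 = 1/(4*x)" if "x \<noteq> 0" for x :: real
      using that by (simp add: power2_eq_square)
    have "1 - (1 - 2*a) = 2*a" "1 + (1 - 2*a) = 2*(1-a)"
      by simp_all
    then show ?thesis
      using a_pos a_less_1 by (simp only: inv) (simp add: field_simps)
  qed
  define E where "E D = A D / (A D + B D) / (1 - t D)^2 + B D / (A D + B D) / (1 + t D)^2" for D
  have "E \<longlonglongrightarrow> a / (1 - (1 - 2*a))^2 + (1-a) / (1 + (1 - 2*a))^2"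
    unfolding E_def using a_pos a_less_1 by (intro tendsto_intros lim_t tendsto_ratio tendsto_complement_ratio) auto
  then have "(\<lambda>D. exp (- E D / 2 * s^2))
    \<longlonglongrightarrow> exp (- (a / (1 - (1 - 2*a))^2 + (1-a) / (1 + (1 - 2*a))^2) / 2 * s^2)"
    by (intro tendsto_intros) simp_all
  also note limit_exponent
  finally have "(\<lambda>D. exp (- E D / 2 * s^2)) \<longlonglongrightarrow> exp (- (s^2) / (2 * (4*a*(1-a))))" .
  moreover have "eventually (\<lambda>D. exp (- E D / 2 * s^2) = rescaled_weight D s) sequentially"
    using eq by eventually_elim (simp add: E_def)
  ultimately show ?thesis
    by (rule Lim_transform_eventually)
qed

lemma integral_eq_rescaled_integral:
  fixes g :: "real \<Rightarrow> real"
  assumes "0 < A D" "0 < B D"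
  shows "(LBINT y:{-1..1}. (1-y) powr A D * (1+y) powr B D * g y) * sqrt (A D + B D)
      / beta_peak (A D) (B D)
    = (\<integral>s. indicator {-1..1} (rescaled_point D s) * rescaled_weight D s * g (rescaled_point D s) \<partial>lborel)"
  using assms set_integral_rescale[where r="sqrt (A D + B D)" and S="{-1..1}" and c="(B D - A D) / (A D + B D)"]
  by (simp add: rescaled_weight_def rescaled_point_def mult.assoc)

lemma rescaled_integrand_le_gaussian:
  fixes g :: "real \<Rightarrow> real"
  assumes "0 < A D" "0 < B D" and bounded: "\<And>y. -1 \<le> y \<Longrightarrow> y \<le> 1 \<Longrightarrow> \<bar>g y\<bar> \<le> M"
  shows "\<bar>indicator {-1..1} (rescaled_point D s) * rescaled_weight D s * g (rescaled_point D s)\<bar>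
    \<le> M * exp (- (s^2) / (2 * 4))"
proof (cases "rescaled_point D s \<in> {-1..1}")
  case True
  have "rescaled_weight D s \<le> exp (- (s^2) / 8)"
    using rescaled_weight_le_gaussian[of D s] assms(1,2) True by simp
  moreover have "\<bar>g (rescaled_point D s)\<bar> \<le> M"
    using bounded True by simp
  ultimately have "rescaled_weight D s * \<bar>g (rescaled_point D s)\<bar> \<le> exp (- (s^2) / 8) * M"
    by (rule mult_mono) (simp_all add: rescaled_weight_nonneg)
  then show ?thesis
    using True rescaled_weight_nonneg[of D s] by (simp add: abs_mult mult.commute)
qed (use bounded[of 0] in simp)

theorem tendsto_laplace_integral:
  fixes g :: "nat \<Rightarrow> real \<Rightarrow> real" and G M :: real
  assumes [measurable]: "\<And>D. g D \<in> borel_measurable borel"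
    and bounded: "\<And>D y. -1 \<le> y \<Longrightarrow> y \<le> 1 \<Longrightarrow> \<bar>g D y\<bar> \<le> M"
    and tendsto_g: "\<And>z. z \<longlonglongrightarrow> 1 - 2*a \<Longrightarrow> (\<lambda>D. g D (z D)) \<longlonglongrightarrow> G"
  shows "(\<lambda>D. (LBINT y:{-1..1}. (1-y) powr A D * (1+y) powr B D * g D y) * sqrt (A D + B D)
      / beta_peak (A D) (B D)) \<longlonglongrightarrow> G * sqrt (8*pi*a*(1-a))"
proof -
  define F where "F D s = indicator {-1..1} (rescaled_point D s) * rescaled_weight D s
    * g D (rescaled_point D s)" for D s
  obtain D0 where D0: "\<And>D. D0 \<le> D \<Longrightarrow> 0 < A D \<and> 0 < B D"
    using eventually_exponents_pos by (auto simp: eventually_sequentially)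
  have lim_F: "(\<lambda>D. F D s) \<longlonglongrightarrow> 1 * exp (- (s^2) / (2 * (4*a*(1-a)))) * G" for s
  proof -
    have "eventually (\<lambda>D. rescaled_point D s \<in> {-1<..<1}) sequentially"
      using a_pos a_less_1 by (intro topological_tendstoD[OF tendsto_rescaled_point]) auto
    then have "eventually (\<lambda>D. 1 = indicator {-1..1} (rescaled_point D s)) sequentially"
      by eventually_elim auto
    then show ?thesis
      unfolding F_def by (intro tendsto_mult tendsto_rescaled_weight tendsto_g tendsto_rescaled_point
          Lim_transform_eventually[OF tendsto_const])
  qed
  have "(\<lambda>i. \<integral>s. F (i + D0) s \<partial>lborel)
    \<longlonglongrightarrow> (\<integral>s. 1 * exp (- (s^2) / (2 * (4*a*(1-a)))) * G \<partial>lborel)"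
  proof (rule integral_dominated_convergence)
    show "F (i + D0) \<in> borel_measurable lborel" for i
      unfolding F_def rescaled_weight_def rescaled_point_def by measurable
    show "integrable lborel (\<lambda>s. M * exp (- (s^2) / (2 * 4)))"
      using has_bochner_integral_gaussian[of 4] by (intro integrable_mult_right) (simp add: has_bochner_integral_iff)
    show "AE s in lborel. norm (F (i + D0) s) \<le> M * exp (- (s^2) / (2 * 4))" for i
      unfolding F_def real_norm_def using D0[of "i + D0"] bounded
      by (intro AE_I2 rescaled_integrand_le_gaussian) auto
  qed (use LIMSEQ_ignore_initial_segment[OF lim_F] in simp_all)
  also have "(\<integral>s. 1 * exp (- (s^2) / (2 * (4*a*(1-a)))) * G \<partial>lborel) = G * sqrt (8*pi*a*(1-a))"
  proof -
    have "(\<integral>s. exp (- (s^2) / (2 * (4*a*(1-a)))) \<partial>lborel) = sqrt (2 * pi * (4*a*(1-a)))"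
      using a_pos a_less_1 by (intro has_bochner_integral_integral_eq has_bochner_integral_gaussian) simp
    then show ?thesis
      by (simp only: mult_1 integral_mult_left_zero) (simp add: algebra_simps)
  qed
  finally have "(\<lambda>D. \<integral>s. F D s \<partial>lborel) \<longlonglongrightarrow> G * sqrt (8*pi*a*(1-a))"
    by (rule LIMSEQ_offset)
  moreover have "eventually (\<lambda>D. (\<integral>s. F D s \<partial>lborel)
      = (LBINT y:{-1..1}. (1-y) powr A D * (1+y) powr B D * g D y) * sqrt (A D + B D)
        / beta_peak (A D) (B D)) sequentially"
    using eventually_ge_at_top[of D0]
    by eventually_elim (simp add: F_def integral_eq_rescaled_integral D0)
  ultimately show ?thesis
    by (rule Lim_transform_eventually)
qed

end

section \<open>Asymptotics of the integral\<close>

lemma beta_laplace_I_nl_exponents: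
  fixes l :: nat and q :: real
  assumes q: "1 < q"
  shows "beta_laplace (\<lambda>D. real l * q - 1 + real D / 2) (\<lambda>D. (real l + 1) * q - 1 + (q - 1/2) * real D)
    (1/(2*q))"
proof
  have sum_eq: "real l * q - 1 + real D / 2 + ((real l + 1) * q - 1 + (q - 1/2) * real D)
      = q * real D + ((2 * real l + 1) * q - 2)" for D :: nat
    by (simp add: algebra_simps)
  show "(\<lambda>D. (real l * q - 1 + real D / 2)
      / (real l * q - 1 + real D / 2 + ((real l + 1) * q - 1 + (q - 1/2) * real D))) \<longlonglongrightarrow> 1/(2*q)"
    using tendsto_linear_ratio[of q "1/2" "real l * q - 1" "(2 * real l + 1) * q - 2"] q
    by (simp add: sum_eq) (simp add: algebra_simps)
  show "filterlim (\<lambda>D. real l * q - 1 + real D / 2 + ((real l + 1) * q - 1 + (q - 1/2) * real D))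
      at_top sequentially"
    unfolding sum_eq using q by (intro filterlim_linear_sequentially) simp
qed (use q in auto)

lemma tendsto_gegenbauer_laplace_integral:
  fixes l k :: nat and q :: real
  assumes q: "1 < q"
  defines "A \<equiv> \<lambda>D::nat. real l * q - 1 + real D / 2"
    and "B \<equiv> \<lambda>D::nat. (real l + 1) * q - 1 + (q - 1/2) * real D"
    and "\<alpha> \<equiv> \<lambda>D::nat. real D / 2 + real l - 1/2"
  shows "(\<lambda>D. (LBINT y:{-1..1}. (1-y) powr A D * (1+y) powr B D
        * \<bar>gegenbauer (\<alpha> D) k y / pochhammer (\<alpha> D) k\<bar> powr (2*q))
      * sqrt (A D + B D) / beta_peak (A D) (B D))
    \<longlonglongrightarrow> ((2*(q-1)/q)^k / fact k) powr (2*q) * (sqrt (2*pi*(2*q-1)) / q)"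
proof -
  interpret beta_laplace A B "1/(2*q)"
    unfolding A_def B_def using q by (rule beta_laplace_I_nl_exponents)
  have \<alpha>_lim: "filterlim \<alpha> at_top sequentially"
    using filterlim_linear_sequentially[of "1/2" "real l - 1/2"] by (simp add: \<alpha>_def algebra_simps)
  obtain M where M: "\<And>D y. \<bar>y\<bar> \<le> 1 \<Longrightarrow> \<bar>gegenbauer (\<alpha> D) k y / pochhammer (\<alpha> D) k\<bar> \<le> M"
    using bounded_gegenbauer_div_pochhammer[OF \<alpha>_lim] by blast
  have center: "1 - 2 * (1/(2*q)) = (q-1)/q"
    using q by (simp add: field_simps)
  have "(\<lambda>D. (LBINT y:{-1..1}. (1-y) powr A D * (1+y) powr B D
        * \<bar>gegenbauer (\<alpha> D) k y / pochhammer (\<alpha> D) k\<bar> powr (2*q))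
      * sqrt (A D + B D) / beta_peak (A D) (B D))
    \<longlonglongrightarrow> \<bar>(2*((q-1)/q))^k / fact k\<bar> powr (2*q) * sqrt (8*pi*(1/(2*q))*(1-1/(2*q)))"
  proof (rule tendsto_laplace_integral)
    show "(\<lambda>y. \<bar>gegenbauer (\<alpha> D) k y / pochhammer (\<alpha> D) k\<bar> powr (2*q)) \<in> borel_measurable borel" for D
      unfolding gegenbauer_def by measurable
    show "\<bar>\<bar>gegenbauer (\<alpha> D) k y / pochhammer (\<alpha> D) k\<bar> powr (2*q)\<bar> \<le> M powr (2*q)"
      if "-1 \<le> y" "y \<le> 1" for D y
      using M[of y D] that q by (auto intro: powr_mono2)
    show "(\<lambda>D. \<bar>gegenbauer (\<alpha> D) k (z D) / pochhammer (\<alpha> D) k\<bar> powr (2*q))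
        \<longlonglongrightarrow> \<bar>(2*((q-1)/q))^k / fact k\<bar> powr (2*q)" if "z \<longlonglongrightarrow> 1 - 2 * (1/(2*q))" for z
      using that q unfolding center
      by (intro tendsto_powr tendsto_rabs tendsto_gegenbauer_div_pochhammer \<alpha>_lim tendsto_const) auto
  qed
  moreover have "8*pi*(1/(2*q))*(1-1/(2*q)) = 2*pi*(2*q-1) / q^2"
    using q by (simp add: field_simps power2_eq_square)
  then have "sqrt (8*pi*(1/(2*q))*(1-1/(2*q))) = sqrt (2*pi*(2*q-1)) / q"
    using q by (simp add: real_sqrt_divide)
  ultimately show ?thesis
    using q by simp
qed

lemma I_nl_eq_pochhammer_integral:
  fixes n l D :: nat and q :: real
  assumes "2 \<le> D"
  defines "\<alpha> \<equiv> real D / 2 + real l - 1/2"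
  shows "I_nl n l q D = pochhammer \<alpha> (n-l-1) powr (2*q)
    * (LBINT y:{-1..1}. (1-y) powr (real l * q - 1 + real D / 2)
        * (1+y) powr ((real l + 1) * q - 1 + (q - 1/2) * real D)
        * \<bar>gegenbauer \<alpha> (n-l-1) y / pochhammer \<alpha> (n-l-1)\<bar> powr (2*q))"
proof -
  have "0 < pochhammer \<alpha> (n-l-1)"
    using assms by (intro pochhammer_pos) (simp add: \<alpha>_def)
  then have "\<bar>gegenbauer \<alpha> (n-l-1) y\<bar> powr (2*q)
      = pochhammer \<alpha> (n-l-1) powr (2*q) * \<bar>gegenbauer \<alpha> (n-l-1) y / pochhammer \<alpha> (n-l-1)\<bar> powr (2*q)" for y
    by (simp add: powr_divide)
  moreover have "real l + (real D - 1) / 2 = \<alpha>"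
    by (simp add: \<alpha>_def field_simps)
  ultimately show ?thesis
    unfolding I_nl_def by (simp add: mult.left_commute)
qed

lemma Q0_eq:
  fixes n l :: nat and q :: real
  assumes "l < n" "1 < q"
  shows "((2*(q-1)/q)^(n-l-1) / fact (n-l-1)) powr (2*q) * (sqrt (2*pi*(2*q-1)) / q)
      * ((1/q) powr (real l * q - 1) * ((2*q-1)/q) powr ((real l + 1) * q - 1))
    = sqrt q * Q0 q n l"
proof -
  define k where "k = n - l - 1"
  have "n - l = Suc k"
    using assms(1) by (simp add: k_def)
  then have n: "real n = real k + real l + 1" and Gamma: "Gamma (real (n - l)) = fact k"
    using assms(1) by (simp_all add: Gamma_fact)
  have pos: "0 < q" "0 < q - 1" "0 < 2*q - 1"
    using assms(2) by auto
  have ln2: "ln (2*q - 2) = ln 2 + ln (q - 1)" "ln (4::real) = 2 * ln 2"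
    using pos ln_mult[of 2 "q-1"] ln_realpow[of 2 2] by (simp_all add: algebra_simps)
  have "ln (((2*(q-1)/q)^k / fact k) powr (2*q) * (sqrt (2*pi*(2*q-1)) / q)
      * ((1/q) powr (real l * q - 1) * ((2*q-1)/q) powr ((real l + 1) * q - 1)))
    = ln (sqrt q * Q0 q n l)"
    using pos unfolding Q0_def Gamma k_def[symmetric]
    by (simp add: ln_mult ln_div ln_sqrt ln_realpow n ln2) (simp add: field_simps)
  then show ?thesis
    using pos unfolding Q0_def Gamma k_def[symmetric] by simp
qed

lemma tendsto_I_nl_normalized:
  fixes n l :: nat and q :: real
  assumes l: "l < n" and q: "1 < q"
  shows "(\<lambda>D. I_nl n l q D * sqrt (real D + 2 * real l - 1)
      / (((2*q - 1) powr (2*q - 1) / q powr (2*q)) powr (real D / 2)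
        * pochhammer (real D / 2 + real l - 1/2) (n-l-1) powr (2*q)))
    \<longlonglongrightarrow> Q0 q n l"
proof -
  define k where "k = n - l - 1"
  define \<rho> where "\<rho> = (2*q - 1) powr (2*q - 1) / q powr (2*q)"
  define A where "A D = real l * q - 1 + real D / 2" for D :: nat
  define B where "B D = (real l + 1) * q - 1 + (q - 1/2) * real D" for D :: nat
  define P where "P D = pochhammer (real D / 2 + real l - 1/2) k" for D :: nat
  define J where "J D = (LBINT y:{-1..1}. (1-y) powr A D * (1+y) powr B D
    * \<bar>gegenbauer (real D / 2 + real l - 1/2) k y / P D\<bar> powr (2*q))" for D
  define C where "C = ((2*(q-1)/q)^k / fact k) powr (2*q) * (sqrt (2*pi*(2*q-1)) / q)"
  define K where "K = (1/q) powr (real l * q - 1) * ((2*q-1)/q) powr ((real l + 1) * q - 1)"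
  have lim_J: "(\<lambda>D. J D * sqrt (A D + B D) / beta_peak (A D) (B D)) \<longlonglongrightarrow> C"
    using tendsto_gegenbauer_laplace_integral[OF q, of l k] by (simp add: J_def A_def B_def P_def C_def)
  have lim_peak: "(\<lambda>D. beta_peak (A D) (B D) / \<rho> powr (real D / 2)) \<longlonglongrightarrow> K"
    using tendsto_beta_peak_half[of q "real l * q - 1" "(real l + 1) * q - 1"] q
    by (simp add: A_def B_def \<rho>_def K_def add.commute)
  have "(\<lambda>D. sqrt ((1 * real D + (2 * real l - 1)) / (q * real D + ((2 * real l + 1) * q - 2))))
    \<longlonglongrightarrow> sqrt (1/q)"
    using q by (intro tendsto_real_sqrt tendsto_linear_ratio) simp
  then have lim_sqrt: "(\<lambda>D. sqrt (real D + 2 * real l - 1) / sqrt (A D + B D)) \<longlonglongrightarrow> 1 / sqrt q"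
    by (simp add: A_def B_def real_sqrt_divide algebra_simps)
  have "C * K * (1 / sqrt q) = Q0 q n l"
    using Q0_eq[OF l q] q by (simp add: C_def K_def k_def)
  with tendsto_mult[OF tendsto_mult[OF lim_J lim_peak] lim_sqrt]
  have lim: "(\<lambda>D. (J D * sqrt (A D + B D) / beta_peak (A D) (B D))
      * (beta_peak (A D) (B D) / \<rho> powr (real D / 2))
      * (sqrt (real D + 2 * real l - 1) / sqrt (A D + B D))) \<longlonglongrightarrow> Q0 q n l"
    by simp
  have cancel: "(j * s / b) * (b / r) * (x / s) = (p * j) * x / (r * p)"
    if "s \<noteq> 0" "b \<noteq> 0" "r \<noteq> 0" "p \<noteq> 0" for j s b r x p :: real
    using that by (simp add: field_simps)
  have "eventually (\<lambda>D. (J D * sqrt (A D + B D) / beta_peak (A D) (B D))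
      * (beta_peak (A D) (B D) / \<rho> powr (real D / 2)) * (sqrt (real D + 2 * real l - 1) / sqrt (A D + B D))
    = I_nl n l q D * sqrt (real D + 2 * real l - 1) / (\<rho> powr (real D / 2) * P D powr (2*q))) sequentially"
    using eventually_ge_at_top[of 3]
  proof eventually_elim
    case (elim D)
    have "0 \<le> real l * q" "0 \<le> (q - 1/2) * real D" "3 \<le> real D"
      using q elim by simp_all
    then have pos: "0 < A D" "0 < B D" "0 < P D"
      unfolding A_def B_def P_def distrib_right using q
      by (linarith, linarith, intro pochhammer_pos, linarith)
    have I_eq: "I_nl n l q D = P D powr (2*q) * J D"
      using elim by (simp add: I_nl_eq_pochhammer_integral A_def B_def P_def J_def k_def)
    show ?case
      unfolding I_eq using pos q by (intro cancel) (simp_all add: beta_peak_def \<rho>_def)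
  qed
  with lim show ?thesis
    unfolding \<rho>_def P_def k_def by (rule Lim_transform_eventually)
qed

lemma I_nl_asymp_pochhammer:
  fixes n l :: nat and q :: real
  assumes "l < n" and "1 < q"
  shows "(\<lambda>D. I_nl n l q D) \<sim>[at_top]
    (\<lambda>D. ((2*q - 1) powr (2*q - 1) / q powr (2*q)) powr (real D / 2)
      * pochhammer (real D / 2 + real l - 1/2) (n-l-1) powr (2*q)
      * (real D + 2 * real l - 1) powr (-1/2) * Q0 q n l)"
proof (rule asymp_equivI')
  have "0 < ((2*(q-1)/q)^(n-l-1) / fact (n-l-1)) powr (2*q) * (sqrt (2*pi*(2*q-1)) / q)
      * ((1/q) powr (real l * q - 1) * ((2*q-1)/q) powr ((real l + 1) * q - 1))"
    using assms(2) by simp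
  then have "0 < Q0 q n l"
    unfolding Q0_eq[OF assms] using assms(2) by (simp add: zero_less_mult_iff)
  then have "(\<lambda>D. I_nl n l q D * sqrt (real D + 2 * real l - 1)
      / (((2*q - 1) powr (2*q - 1) / q powr (2*q)) powr (real D / 2)
        * pochhammer (real D / 2 + real l - 1/2) (n-l-1) powr (2*q)) / Q0 q n l)
    \<longlonglongrightarrow> Q0 q n l / Q0 q n l"
    by (intro tendsto_divide tendsto_I_nl_normalized assms tendsto_const) simp
  moreover have "eventually (\<lambda>D. real D + 2 * real l - 1 > 0) sequentially"
    using eventually_linear_pos[of 1 "2 * real l - 1"] by (simp only: mult_1 add_diff_eq)
  then have "eventually (\<lambda>D. I_nl n l q D * sqrt (real D + 2 * real l - 1)
      / (((2*q - 1) powr (2*q - 1) / q powr (2*q)) powr (real D / 2)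
        * pochhammer (real D / 2 + real l - 1/2) (n-l-1) powr (2*q)) / Q0 q n l
    = I_nl n l q D / (((2*q - 1) powr (2*q - 1) / q powr (2*q)) powr (real D / 2)
      * pochhammer (real D / 2 + real l - 1/2) (n-l-1) powr (2*q)
      * (real D + 2 * real l - 1) powr (-1/2) * Q0 q n l)) sequentially"
    by eventually_elim (simp add: powr_minus_divide powr_half_sqrt)
  ultimately show "(\<lambda>D. I_nl n l q D / (((2*q - 1) powr (2*q - 1) / q powr (2*q)) powr (real D / 2)
      * pochhammer (real D / 2 + real l - 1/2) (n-l-1) powr (2*q)
      * (real D + 2 * real l - 1) powr (-1/2) * Q0 q n l)) \<longlonglongrightarrow> 1"
    using \<open>0 < Q0 q n l\<close> by (simp add: Lim_transform_eventually)
qed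

lemma pochhammer_eq_Gamma_ratio:
  fixes n l D :: nat
  assumes "l < n" "2 \<le> D"
  shows "pochhammer (real D / 2 + real l - 1/2) (n-l-1)
    = Gamma (real D / 2 + real n - 3/2) / Gamma (real D / 2 + real l - 1/2)"
proof -
  have "real D / 2 + real l - 1/2 \<notin> \<int>\<^sub>\<le>\<^sub>0"
    using assms(2) by (auto dest!: nonpos_Ints_nonpos)
  then have "pochhammer (real D / 2 + real l - 1/2) (n-l-1)
      = Gamma (real D / 2 + real l - 1/2 + real (n-l-1)) / Gamma (real D / 2 + real l - 1/2)"
    by (rule pochhammer_Gamma)
  also have "real D / 2 + real l - 1/2 + real (n-l-1) = real D / 2 + real n - 3/2"
    using assms(1) by (simp add: of_nat_diff)
  finally show ?thesis .
qed

lemma half_powr_mult_powr_neg_half: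
  fixes x q k :: real
  assumes "0 < x"
  shows "(x / 2) powr (2*q * k) * x powr (-1/2) = x powr (2*q * k - 1/2) * 4 powr (- q * k)"
proof -
  have "ln (4::real) = 2 * ln 2"
    using ln_realpow[of 2 2] by simp
  then have "ln ((x / 2) powr (2*q * k) * x powr (-1/2)) = ln (x powr (2*q * k - 1/2) * 4 powr (- q * k))"
    using assms by (simp add: ln_mult ln_div algebra_simps)
  then show ?thesis
    using assms by simp
qed

theorem mainTheorem3:
  fixes n l :: nat and q :: real
  assumes "1 \<le> n" and "l \<le> n - 1" and "1 < q"
  shows "(\<lambda>D::nat. I_nl n l q D) \<sim>[at_top]
           (\<lambda>D::nat. (((2*q - 1) powr (2*q - 1) / q powr (2*q)) powr (real D / 2))
              * (Gamma (real D / 2 + real n - 3/2) / Gamma (real D / 2 + real l - 1/2)) powr (2*q)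
              * (real D + 2 * real l - 1) powr (-1/2) * Q0 q n l)
       \<and> (\<lambda>D::nat. I_nl n l q D) \<sim>[at_top]
           (\<lambda>D::nat. (((2*q - 1) powr (2*q - 1) / q powr (2*q)) powr (real D / 2))
              * real D powr (2*q * real (n - l - 1) - 1/2)
              * 4 powr (- q * real (n - l - 1)) * Q0 q n l)"
    (is "?I \<sim>[at_top] ?T1 \<and> ?I \<sim>[at_top] ?T2")
proof
  define \<rho> where "\<rho> = (2*q - 1) powr (2*q - 1) / q powr (2*q)"
  define P where "P D = pochhammer (real D / 2 + real l - 1/2) (n-l-1)" for D :: nat
  have l: "l < n"
    using assms(1,2) by linarith
  have I_P: "?I \<sim>[at_top]
      (\<lambda>D. \<rho> powr (real D / 2) * (P D powr (2*q) * (real D + 2 * real l - 1) powr (-1/2)) * Q0 q n l)"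
    using I_nl_asymp_pochhammer[OF l assms(3)] by (simp add: P_def \<rho>_def mult.assoc)
  have "eventually (\<lambda>D. \<rho> powr (real D / 2) * (P D powr (2*q) * (real D + 2 * real l - 1) powr (-1/2))
      * Q0 q n l = ?T1 D) sequentially"
    using eventually_ge_at_top[of 2]
    by eventually_elim (simp only: P_def \<rho>_def pochhammer_eq_Gamma_ratio[OF l] mult.assoc)
  then show "?I \<sim>[at_top] ?T1"
    by (rule asymp_equiv_transfer[OF I_P, rotated]) simp
  have "(\<lambda>D. P D powr (2*q) * (real D + 2 * real l - 1) powr (-1/2))
      \<sim>[at_top] (\<lambda>D. (real D / 2) powr (2*q * real (n-l-1)) * real D powr (-1/2))"
    using asymp_equiv_pochhammer_powr[of "real l - 1/2" "n-l-1" "2*q" "2 * real l - 1" "-1/2"]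
    by (simp only: P_def add_diff_eq mult.assoc)
  with I_P have I_T2: "?I \<sim>[at_top]
      (\<lambda>D. \<rho> powr (real D / 2) * ((real D / 2) powr (2*q * real (n-l-1)) * real D powr (-1/2)) * Q0 q n l)"
    by (rule asymp_equiv_trans[OF _ asymp_equiv_mult[OF asymp_equiv_mult[OF asymp_equiv_refl] asymp_equiv_refl]])
  have "eventually (\<lambda>D. \<rho> powr (real D / 2) * ((real D / 2) powr (2*q * real (n-l-1))
      * real D powr (-1/2)) * Q0 q n l = ?T2 D) sequentially"
    using eventually_gt_at_top[of 0]
    by eventually_elim (simp only: \<rho>_def half_powr_mult_powr_neg_half of_nat_0_less_iff)
  then show "?I \<sim>[at_top] ?T2"
    by (rule asymp_equiv_transfer[OF I_T2, rotated]) simp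
qed

end
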